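(* Consider the scheduling model described in the context with parameters $(p_k,q_k,d,K)$. Suppose a fixed source $k$ is scheduled in every time slot, starting from $t=-\infty$. Then the expected reward received by the monitoring station in any time slot equals $\mu_k := \frac{p_kq_k}{1-d(1-p_k)}$. Consequently the optimal source, i.e. the source whose permanent scheduling (from $t=-\infty$) maximizes the expected reward received by the monitoring station, and which the oracle policy schedules in every time slot, is $$k^* = \arg\max_{1\le k\le K}\frac{p_kq_k}{1-d(1-p_k)}.$$
   Context: Model: there are $K$ sources, one communication channel and one monitoring station; time is slotted. In each slot exactly one source is scheduled to transmit its update. If source $k$ is scheduled, the transmission succeeds with probability $p_k$ (independently across slots and of everything else), and the update is a correct measurement ($Q=1$) with probability $q_k$, otherwise $Q=0$ (independently across slots and of everything else). The age of information $a(t)$ at slot $t$ satisfies $a(t)=1$ if the transmission in slot $t-1$ succeeded and $a(t)=a(t-1)+1$ otherwise. With a known depreciation factor $d\in(0,1)$, the reward in slot $t$ is $r(t)=Q(t-a(t))\,d^{a(t)-1}$, where $Q(s)\in\{0,1\}$ is the correctness indicator of the update successfully delivered in slot $s$; equivalently $r(t)=Q(t-1)$ if the transmission in slot $t-1$ succeeds and $r(t)=d\,r(t-1)$ otherwise. *)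

theory Defs
  imports "HOL-Probability.Probability"
begin

text \<open>S t w: the transmission in slot t succeeds;
  Q t w: the update sent in slot t is a correct measurement.
  Age at slot t: a(t) = least j \<ge> 1 such that the transmission in slot t - j succeeded
  (this is the unique solution of a(t) = 1 if success at t-1, a(t) = a(t-1)+1 otherwise,
  for a process started at t = -infinity).\<close>

definition age :: "(int \<Rightarrow> 'a \<Rightarrow> bool) \<Rightarrow> int \<Rightarrow> 'a \<Rightarrow> nat" where
  "age S t w = (LEAST j. j \<ge> 1 \<and> S (t - int j) w)"

text \<open>Reward r(t) = Q(t - a(t)) d^(a(t)-1); on the (probability zero) event that no
  transmission ever succeeded we set the reward to 0.\<close>

definition reward ::
  "(int \<Rightarrow> 'a \<Rightarrow> bool) \<Rightarrow> (int \<Rightarrow> 'a \<Rightarrow> bool) \<Rightarrow> real \<Rightarrow> int \<Rightarrow> 'a \<Rightarrow> real" where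
  "reward S Q d t w =
     (if \<exists>j\<ge>1. S (t - int j) w
      then (if Q (t - int (age S t w)) w then d ^ (age S t w - 1) else 0)
      else 0)"

definition mu :: "real \<Rightarrow> real \<Rightarrow> real \<Rightarrow> real" where
  "mu p q d = p * q / (1 - d * (1 - p))"

end

theory Submission
  imports Defs
begin

text \<open>The reward at slot t is d^(j-1) exactly when the last successful transmission happened
  j slots ago and carried a correct update. By independence across slots this event has
  probability (1-p)^(j-1) p q, so the expected reward is the geometric series
  \<Sum>j\<ge>1. p q (d (1-p))^(j-1) = p q / (1 - d (1-p)), the same for every slot.\<close>

definition correct_age_event ::
  "(int \<Rightarrow> 'a \<Rightarrow> bool) \<Rightarrow> (int \<Rightarrow> 'a \<Rightarrow> bool) \<Rightarrow> int \<Rightarrow> nat \<Rightarrow> 'a set" where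
  "correct_age_event S Q t j =
     {w. S (t - int j) w \<and> (\<forall>i\<in>{1..<j}. \<not> S (t - int i) w) \<and> Q (t - int j) w}"

lemma age_ge_1:
  assumes "\<exists>j\<ge>1. S (t - int j) w"
  shows "1 \<le> age S t w"
  using LeastI_ex[OF assms] unfolding age_def by blast

lemma age_eq_iff:
  assumes "1 \<le> j"
  shows "((\<exists>i\<ge>1. S (t - int i) w) \<and> age S t w = j) \<longleftrightarrow>
         S (t - int j) w \<and> (\<forall>i\<in>{1..<j}. \<not> S (t - int i) w)"
proof
  assume "(\<exists>i\<ge>1. S (t - int i) w) \<and> age S t w = j"
  then show "S (t - int j) w \<and> (\<forall>i\<in>{1..<j}. \<not> S (t - int i) w)"
    unfolding age_def by (metis (mono_tags, lifting) LeastI not_less_Least atLeastLessThan_iff)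
next
  assume first: "S (t - int j) w \<and> (\<forall>i\<in>{1..<j}. \<not> S (t - int i) w)"
  then have "age S t w = j"
    unfolding age_def using assms by (intro Least_equality) (auto simp: not_le[symmetric])
  with first assms show "(\<exists>i\<ge>1. S (t - int i) w) \<and> age S t w = j"
    by blast
qed

lemma mem_correct_age_event_iff:
  assumes "1 \<le> j"
  shows "w \<in> correct_age_event S Q t j \<longleftrightarrow>
         (\<exists>i\<ge>1. S (t - int i) w) \<and> age S t w = j \<and> Q (t - int j) w"
  using age_eq_iff[OF assms, of S t w] unfolding correct_age_event_def by blast

lemma reward_eq_suminf:
  "reward S Q d t w = (\<Sum>n. d ^ n * indicator (correct_age_event S Q t (Suc n)) w)"
proof (cases "\<exists>j\<ge>1. S (t - int j) w")
  case True
  define a where "a = age S t w"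
  have "1 \<le> a"
    unfolding a_def using True by (rule age_ge_1)
  then have "d ^ n * indicator (correct_age_event S Q t (Suc n)) w =
             (if n = a - 1 then reward S Q d t w else 0)" for n
    using True by (auto simp: mem_correct_age_event_iff reward_def a_def indicator_def)
  then show ?thesis
    using sums_unique[OF sums_single[of "a - 1" "\<lambda>_. reward S Q d t w"]] by simp
next
  case False
  then have "w \<notin> correct_age_event S Q t (Suc n)" for n
    unfolding correct_age_event_def by auto
  moreover have "reward S Q d t w = 0"
    unfolding reward_def using False by (rule if_not_P)
  ultimately show ?thesis
    by simp
qed

lemma (in prob_space) prob_indep_vars_bool:
  fixes X :: "'i \<Rightarrow> 'a \<Rightarrow> bool"
  assumes indep: "indep_vars (\<lambda>_. count_space UNIV) X I" and "finite J" "J \<subseteq> I"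
  shows "prob {w \<in> space M. \<forall>i\<in>J. X i w = b i} = (\<Prod>i\<in>J. prob {w \<in> space M. X i w = b i})"
proof (cases "J = {}")
  case True
  then show ?thesis by (simp add: prob_space)
next
  case False
  have "indep_events (\<lambda>i. {w \<in> space M. X i w = b i}) I"
    using indep_eventsI_indep_vars[OF indep, of "\<lambda>i x. x = b i"] by simp
  then have "prob (\<Inter>i\<in>J. {w \<in> space M. X i w = b i}) = (\<Prod>i\<in>J. prob {w \<in> space M. X i w = b i})"
    using assms False unfolding indep_events_def by blast
  moreover have "(\<Inter>i\<in>J. {w \<in> space M. X i w = b i}) = {w \<in> space M. \<forall>i\<in>J. X i w = b i}"
    using False by auto
  ultimately show ?thesis by simp
qed

locale single_source = prob_space M for M :: "'a measure" +
  fixes S Q :: "int \<Rightarrow> 'a \<Rightarrow> bool" and p q :: real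
  assumes indep_S_Q: "indep_vars (\<lambda>_. count_space UNIV)
      (\<lambda>(t, b). if b then S t else Q t) (UNIV :: (int \<times> bool) set)"
    and prob_S: "prob {w \<in> space M. S t w} = p"
    and prob_Q: "prob {w \<in> space M. Q t w} = q"
begin

lemma measurable_S_Q [measurable]: "Measurable.pred M (S t)" "Measurable.pred M (Q t)"
proof -
  have "\<forall>i\<in>UNIV. random_variable (count_space UNIV) ((\<lambda>(t, b). if b then S t else Q t) i)"
    using indep_S_Q unfolding indep_vars_def2 by (rule conjunct1)
  from this[THEN bspec, of "(t, True)"] this[THEN bspec, of "(t, False)"]
  show "Measurable.pred M (S t)" "Measurable.pred M (Q t)"
    by (simp_all add: pred_def)
qed

lemma p_bounds: "0 \<le> p" "p \<le> 1"
  using prob_S[of 0] by auto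

lemma prob_not_S: "prob {w \<in> space M. \<not> S t w} = 1 - p"
proof -
  have "{w \<in> space M. \<not> S t w} = space M - {w \<in> space M. S t w}"
    by auto
  then show ?thesis
    using prob_compl[of "{w \<in> space M. S t w}"] prob_S by simp
qed

lemma prob_correct_age_event:
  assumes "1 \<le> j"
  shows "prob (correct_age_event S Q t j \<inter> space M) = (1 - p) ^ (j - 1) * p * q"
proof -
  define X where "X = (\<lambda>(s, c). if c then S s else Q s)"
  define b :: "int \<times> bool \<Rightarrow> bool" where "b = (\<lambda>(s, c). s = t - int j \<or> \<not> c)"
  define J where "J = insert (t - int j, False)
    (insert (t - int j, True) ((\<lambda>i. (t - int i, True)) ` {1..<j}))"
  have "correct_age_event S Q t j \<inter> space M = {w \<in> space M. \<forall>i\<in>J. X i w = b i}"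
    by (auto simp: correct_age_event_def J_def X_def b_def)
  also have "prob \<dots> = (\<Prod>i\<in>J. prob {w \<in> space M. X i w = b i})"
    using indep_S_Q by (intro prob_indep_vars_bool) (auto simp: X_def J_def)
  also have "\<dots> = q * (p * (\<Prod>i\<in>{1..<j}. prob {w \<in> space M. \<not> S (t - int i) w}))"
    by (simp add: J_def X_def b_def prob_S prob_Q image_iff prod.reindex inj_on_def)
  also have "\<dots> = (1 - p) ^ (j - 1) * p * q"
    by (simp add: prob_not_S)
  finally show ?thesis .
qed

lemma expectation_reward:
  assumes "0 \<le> d" "d < 1"
  shows "expectation (reward S Q d t) = mu p q d"
proof -
  define f where "f n w = d ^ n * indicator (correct_age_event S Q t (Suc n) \<inter> space M) w" for n w
  have events: "correct_age_event S Q t j \<inter> space M \<in> events" for j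
  proof -
    have "correct_age_event S Q t j \<inter> space M = {w \<in> space M.
        S (t - int j) w \<and> (\<forall>i\<in>{1..<j}. \<not> S (t - int i) w) \<and> Q (t - int j) w}"
      by (auto simp: correct_age_event_def)
    also have "\<dots> \<in> events"
      by measurable
    finally show ?thesis .
  qed
  have integrable_f: "integrable M (f n)" for n
    unfolding f_def using events
    by (intro integrable_mult_right integrable_real_indicator) (auto simp: less_top[symmetric])
  have integral_f: "expectation (f n) = p * q * (d * (1 - p)) ^ n" for n
    unfolding f_def using events
    by (simp add: prob_correct_age_event power_mult_distrib)
  have f_nonneg: "0 \<le> f n w" for n w
    unfolding f_def using assms by simp
  have ratio: "norm (d * (1 - p)) < 1"
    using assms p_bounds mult_left_le[of "1 - p" d] by simp
  have "expectation (reward S Q d t) = expectation (\<lambda>w. \<Sum>n. f n w)"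
    by (rule Bochner_Integration.integral_cong) (auto simp: reward_eq_suminf f_def indicator_def)
  also have "\<dots> = (\<Sum>n. expectation (f n))"
  proof (rule integral_suminf)
    show "AE w in M. summable (\<lambda>n. norm (f n w))"
      using assms f_nonneg
      by (intro AE_I2 summable_comparison_test[OF _ summable_geometric[of d]])
         (auto simp: f_def indicator_def)
    show "summable (\<lambda>n. expectation (\<lambda>w. norm (f n w)))"
      using f_nonneg summable_mult[OF summable_geometric[OF ratio]] by (simp add: integral_f)
  qed (rule integrable_f)
  also have "\<dots> = mu p q d"
    using suminf_mult[OF summable_geometric[OF ratio]] suminf_geometric[OF ratio]
    by (simp add: integral_f mu_def)
  finally show ?thesis .
qed

end

theorem theorem1:
  fixes M :: "'a measure" and K :: nat and p q :: "nat \<Rightarrow> real" and d :: real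
    and S Q :: "nat \<Rightarrow> int \<Rightarrow> 'a \<Rightarrow> bool"
  assumes "prob_space M"
    and "K \<ge> 1"
    and "0 < d" and "d < 1"
    and "\<And>k. k \<in> {1..K} \<Longrightarrow> 0 \<le> p k \<and> p k \<le> 1"
    and "\<And>k. k \<in> {1..K} \<Longrightarrow> 0 \<le> q k \<and> q k \<le> 1"
    and "\<And>k. k \<in> {1..K} \<Longrightarrow>
           prob_space.indep_vars M (\<lambda>_. count_space UNIV)
             (\<lambda>(t, b). if b then S k t else Q k t) (UNIV :: (int \<times> bool) set)"
    and "\<And>k t. k \<in> {1..K} \<Longrightarrow> measure M {w \<in> space M. S k t w} = p k"
    and "\<And>k t. k \<in> {1..K} \<Longrightarrow> measure M {w \<in> space M. Q k t w} = q k"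
  shows "(\<forall>k\<in>{1..K}. \<forall>t. integral\<^sup>L M (reward (S k) (Q k) d t) = mu (p k) (q k) d)
       \<and> (\<forall>ks\<in>{1..K}.
            (\<forall>k\<in>{1..K}. \<forall>t. integral\<^sup>L M (reward (S k) (Q k) d t)
                               \<le> integral\<^sup>L M (reward (S ks) (Q ks) d t))
            \<longleftrightarrow> (\<forall>k\<in>{1..K}. mu (p k) (q k) d \<le> mu (p ks) (q ks) d))"
proof -
  have expected_reward: "integral\<^sup>L M (reward (S k) (Q k) d t) = mu (p k) (q k) d"
    if "k \<in> {1..K}" for k t
  proof -
    interpret single_source M "S k" "Q k" "p k" "q k"
      unfolding single_source_def single_source_axioms_def
      using assms(1,7-9) that by blast
    show ?thesis
      using assms(3,4) by (intro expectation_reward) auto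
  qed
  then show ?thesis
    by auto
qed

end
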